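(* Assume the standing assumptions. Let $\bar u$ be a local solution of (P) with radius $\rho>0$, let $\epsilon_k>0$ with $\epsilon_k\to0$, let $u_k$ be a global solution of $\min\{\Phi_{\epsilon_k}(u)+\frac12\|u-\bar u\|_{L^2(\Omega)}^2:\ u\in V,\ \|u-\bar u\|_V\le\rho\}$, and let $\lambda_k\in V^*$, $\langle\lambda_k,v\rangle_{V^*,V}:=\int_\Omega 2u_k\psi_{\epsilon_k}'(u_k^2)v\,dx$. Suppose $u_k\to\bar u$ in $V$ and $\lambda_k\to\bar\lambda$ in $V^*$. Then \[ \langle\lambda_k,u_k\rangle_{V^*,V}\to\langle\bar\lambda,\bar u\rangle_{V^*,V}=p\int_\Omega|\bar u|^p\,dx . \]
   Context: Standing assumptions: $\Omega\subset\mathbb R^d$ bounded Lipschitz domain; $V$ real Hilbert space with inner product $\langle\cdot,\cdot\rangle_V$, $V\subset L^2(\Omega)$ with compact and dense embedding; $V^*$ dual with pairing $\langle\cdot,\cdot\rangle_{V^*,V}$. $F:V\to\mathbb R$ weakly lower semicontinuous, bounded below by an affine function, continuously Fréchet differentiable. $\alpha>0$, $\beta>0$, $p\in(0,1)$. For $\epsilon>0$, $\psi_\epsilon(t)=\frac p2\frac{t}{\epsilon^{2-p}}+(1-\frac p2)\epsilon^p$ if $t\in[0,\epsilon^2)$ and $\psi_\epsilon(t)=t^{p/2}$ if $t\ge\epsilon^2$, with $\psi_\epsilon'(t)=\frac p2\min(\epsilon^{p-2},t^{(p-2)/2})$; $\psi_0(t)=t^{p/2}$. $G_\epsilon(u):=\int_\Omega\psi_\epsilon(|u|^2)\,dx$,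 $\Phi_\epsilon(u):=F(u)+\frac\alpha2\|u\|_V^2+\beta G_\epsilon(u)$ for $\epsilon\ge0$. (P) is $\min_{u\in V}\Phi_0(u)$; $\bar u$ is a local solution with radius $\rho$ if $\Phi_0(\bar u)\le\Phi_0(u)$ whenever $\|u-\bar u\|_V\le\rho$. *)

theory Defs
  imports "HOL-Analysis.Analysis"
begin

definition lipschitz_domain :: "'a::euclidean_space set \<Rightarrow> bool" where
  "lipschitz_domain \<Omega> \<longleftrightarrow> open \<Omega> \<and> connected \<Omega> \<and> \<Omega> \<noteq> {} \<and>
     (\<forall>x0 \<in> frontier \<Omega>. \<exists>r>0. \<exists>n::'a. \<exists>\<gamma>::'a \<Rightarrow> real. \<exists>L.
        norm n = 1 \<and> lipschitz_on L {y. y \<bullet> n = 0} \<gamma> \<and>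
        \<Omega> \<inter> ball x0 r = {x \<in> ball x0 r. x \<bullet> n > \<gamma> (x - (x \<bullet> n) *\<^sub>R n)})"

definition L2set :: "'a::euclidean_space set \<Rightarrow> ('a \<Rightarrow> real) set" where
  "L2set \<Omega> = {f. set_borel_measurable lebesgue \<Omega> f \<and> set_integrable lebesgue \<Omega> (\<lambda>x. (f x)\<^sup>2)}"

definition L2norm :: "'a::euclidean_space set \<Rightarrow> ('a \<Rightarrow> real) \<Rightarrow> real" where
  "L2norm \<Omega> f = sqrt (LINT x:\<Omega>|lebesgue. (f x)\<^sup>2)"

definition compact_dense_embedding ::
  "'a::euclidean_space set \<Rightarrow> ('v::{real_inner,complete_space} \<Rightarrow> 'a \<Rightarrow> real) \<Rightarrow> bool" where
  "compact_dense_embedding \<Omega> \<iota> \<longleftrightarrow>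
     (\<forall>v. \<iota> v \<in> L2set \<Omega>) \<and>
     (\<forall>u w. AE x in lebesgue. x \<in> \<Omega> \<longrightarrow> \<iota> (u + w) x = \<iota> u x + \<iota> w x) \<and>
     (\<forall>c u. AE x in lebesgue. x \<in> \<Omega> \<longrightarrow> \<iota> (c *\<^sub>R u) x = c * \<iota> u x) \<and>
     (\<forall>v. (AE x in lebesgue. x \<in> \<Omega> \<longrightarrow> \<iota> v x = 0) \<longrightarrow> v = 0) \<and>
     (\<exists>C. \<forall>v. L2norm \<Omega> (\<iota> v) \<le> C * norm v) \<and>
     (\<forall>vs::nat \<Rightarrow> 'v. bounded (range vs) \<longrightarrow>
        (\<exists>r f. strict_mono r \<and> f \<in> L2set \<Omega> \<and>
           (\<lambda>n. L2norm \<Omega> (\<lambda>x. \<iota> (vs (r n)) x - f x)) \<longlonglongrightarrow> 0)) \<and>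
     (\<forall>f \<in> L2set \<Omega>. \<forall>e>0. \<exists>v. L2norm \<Omega> (\<lambda>x. \<iota> v x - f x) < e)"

definition weakly_lsc :: "('v::real_inner \<Rightarrow> real) \<Rightarrow> bool" where
  "weakly_lsc F \<longleftrightarrow> (\<forall>us u. (\<forall>v. (\<lambda>n. inner (us n) v) \<longlonglongrightarrow> inner u v) \<longrightarrow>
                         ereal (F u) \<le> liminf (\<lambda>n. ereal (F (us n))))"

definition bounded_below_affine :: "('v::real_normed_vector \<Rightarrow> real) \<Rightarrow> bool" where
  "bounded_below_affine F \<longleftrightarrow> (\<exists>l::'v \<Rightarrow>\<^sub>L real. \<exists>c. \<forall>u. blinfun_apply l u + c \<le> F u)"

definition continuously_frechet_differentiable :: "('v::real_normed_vector \<Rightarrow> real) \<Rightarrow> bool" where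
  "continuously_frechet_differentiable F \<longleftrightarrow>
     (\<exists>F' :: 'v \<Rightarrow> ('v \<Rightarrow>\<^sub>L real). (\<forall>u. (F has_derivative blinfun_apply (F' u)) (at u)) \<and>
        continuous_on UNIV F')"

definition psi :: "real \<Rightarrow> real \<Rightarrow> real \<Rightarrow> real" where
  "psi p \<epsilon> t = (if \<epsilon> = 0 then t powr (p/2)
     else if t < \<epsilon>\<^sup>2 then p/2 * t / \<epsilon> powr (2 - p) + (1 - p/2) * \<epsilon> powr p
     else t powr (p/2))"

text \<open>Derivative psi'_eps(t) = p/2 min(eps^(p-2), t^((p-2)/2)) for eps > 0, t >= 0
  (written by cases to avoid the convention 0 powr a = 0).\<close>
definition psi' :: "real \<Rightarrow> real \<Rightarrow> real \<Rightarrow> real" where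
  "psi' p \<epsilon> t = (if t < \<epsilon>\<^sup>2 then p/2 * \<epsilon> powr (p - 2) else p/2 * t powr ((p - 2)/2))"

definition G :: "'a::euclidean_space set \<Rightarrow> ('v \<Rightarrow> 'a \<Rightarrow> real) \<Rightarrow> real \<Rightarrow> real \<Rightarrow> 'v \<Rightarrow> real" where
  "G \<Omega> \<iota> p \<epsilon> u = (LINT x:\<Omega>|lebesgue. psi p \<epsilon> ((\<iota> u x)\<^sup>2))"

definition Phi :: "'a::euclidean_space set \<Rightarrow> ('v::real_normed_vector \<Rightarrow> 'a \<Rightarrow> real) \<Rightarrow>
    ('v \<Rightarrow> real) \<Rightarrow> real \<Rightarrow> real \<Rightarrow> real \<Rightarrow> real \<Rightarrow> 'v \<Rightarrow> real" where
  "Phi \<Omega> \<iota> F \<alpha> \<beta> p \<epsilon> u = F u + \<alpha>/2 * (norm u)\<^sup>2 + \<beta> * G \<Omega> \<iota> p \<epsilon> u"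

end

theory Submission
  imports Defs
begin

text \<open>
  Where \<open>|y| \<ge> \<epsilon>\<close> the integrand \<open>2 y \<psi>'\<^sub>\<epsilon>(y\<^sup>2) y\<close> equals \<open>p |y|\<^sup>p\<close>, and where \<open>|y| < \<epsilon>\<close>
  both lie in \<open>[0, p \<epsilon>\<^sup>p]\<close>; as \<open>\<Omega>\<close> has finite measure, \<open>\<lambda>\<^sub>k(u\<^sub>k) - p \<integral>|u\<^sub>k|\<^sup>p \<rightarrow> 0\<close>.
  Convergence in \<open>V\<close> gives convergence in \<open>L\<^sup>2(\<Omega>)\<close>, and \<open>\<integral>|u\<^sub>k|\<^sup>p \<rightarrow> \<integral>|ubar|\<^sup>p\<close> follows
  from \<open>||a|\<^sup>p - |b|\<^sup>p| \<le> |a - b|\<^sup>p\<close> together with \<open>|t|\<^sup>p \<le> \<delta>\<^sup>p + \<delta>\<^bsup>p-2\<^esup> t\<^sup>2\<close>, taking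
  \<open>\<delta>\<close> of the size of the \<open>L\<^sup>2\<close> distance. Hence \<open>\<lambda>\<^sub>k(u\<^sub>k) \<rightarrow> p \<integral>|ubar|\<^sup>p\<close>, while
  \<open>\<lambda>\<^sub>k(u\<^sub>k) \<rightarrow> lbar(ubar)\<close> by joint continuity of evaluation.
\<close>

lemma powr_add_le_add_powr:
  fixes a b p :: real
  assumes "0 \<le> a" "0 \<le> b" "0 < p" "p \<le> 1"
  shows "(a + b) powr p \<le> a powr p + b powr p"
proof (cases "a + b = 0")
  case True
  then show ?thesis using assms by auto
next
  case False
  hence s: "a + b > 0" using assms by auto
  have frac_le: "(a + b) powr p * (c / (a + b)) \<le> c powr p" if "0 \<le> c" "c \<le> a + b" for c
  proof (cases "c = 0")
    case False
    have "c / (a + b) = (c / (a + b)) powr 1" using that False s by simp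
    also have "\<dots> \<le> (c / (a + b)) powr p"
      using that False s assms by (intro powr_mono') auto
    finally have "(a + b) powr p * (c / (a + b)) \<le> (a + b) powr p * (c / (a + b)) powr p"
      by (intro mult_left_mono) auto
    also have "\<dots> = c powr p" using that s by (simp add: powr_divide)
    finally show ?thesis .
  qed simp
  have "(a + b) powr p = (a + b) powr p * (a / (a + b)) + (a + b) powr p * (b / (a + b))"
    using s by (simp add: add_divide_distrib[symmetric] flip: distrib_left)
  also have "\<dots> \<le> a powr p + b powr p"
    using assms by (intro add_mono frac_le) auto
  finally show ?thesis .
qed

lemma abs_diff_abs_powr_le:
  fixes y z p :: real
  assumes "0 < p" "p \<le> 1"
  shows "\<bar>\<bar>y\<bar> powr p - \<bar>z\<bar> powr p\<bar> \<le> \<bar>y - z\<bar> powr p"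
proof -
  have "\<bar>a\<bar> powr p \<le> \<bar>b\<bar> powr p + \<bar>a - b\<bar> powr p" for a b :: real
  proof -
    have "\<bar>a\<bar> powr p \<le> (\<bar>b\<bar> + \<bar>a - b\<bar>) powr p"
      using assms by (intro powr_mono2) auto
    also have "\<dots> \<le> \<bar>b\<bar> powr p + \<bar>a - b\<bar> powr p"
      using assms by (intro powr_add_le_add_powr) auto
    finally show ?thesis .
  qed
  from this[of y z] this[of z y] show ?thesis by (simp add: abs_minus_commute abs_le_iff)
qed

lemma powr_le_powr_add_square:
  fixes t d p :: real
  assumes "0 \<le> t" "0 < d" "0 < p" "p \<le> 2"
  shows "t powr p \<le> d powr p + d powr (p - 2) * t\<^sup>2"
proof (cases "t \<le> d")
  case True
  hence "t powr p \<le> d powr p" using assms by (intro powr_mono2) auto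
  then show ?thesis by (simp add: add_increasing2)
next
  case False
  hence "t > 0" using assms by auto
  have "t powr p = t powr (p - 2) * t\<^sup>2" using \<open>t > 0\<close>
    by (simp add: powr_diff power2_eq_square)
  also have "\<dots> \<le> d powr (p - 2) * t\<^sup>2"
    using False assms by (intro mult_right_mono powr_mono2') auto
  finally show ?thesis by (simp add: add_increasing)
qed

lemma psi'_weighted_approx:
  fixes y p e :: real
  assumes "0 < e" "0 < p"
  shows "\<bar>2 * y * psi' p e (y\<^sup>2) * y - p * \<bar>y\<bar> powr p\<bar> \<le> p * e powr p"
proof (cases "y\<^sup>2 < e\<^sup>2")
  case True
  hence "\<bar>y\<bar> < e" using assms by (simp add: power2_less_imp_less)
  have "e powr (p - 2) * y\<^sup>2 \<le> e powr (p - 2) * e\<^sup>2"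
    using True by (intro mult_left_mono) auto
  also have "\<dots> = e powr p" using assms by (simp add: powr_diff power2_eq_square)
  finally have "e powr (p - 2) * y\<^sup>2 \<le> e powr p" .
  moreover have "\<bar>y\<bar> powr p \<le> e powr p" using \<open>\<bar>y\<bar> < e\<close> assms by (intro powr_mono2) auto
  ultimately have "\<bar>e powr (p - 2) * y\<^sup>2 - \<bar>y\<bar> powr p\<bar> \<le> e powr p"
    using powr_ge_zero[of "\<bar>y\<bar>" p] mult_nonneg_nonneg[OF powr_ge_zero zero_le_power2, of e "p - 2" y]
    by linarith
  hence "p * \<bar>e powr (p - 2) * y\<^sup>2 - \<bar>y\<bar> powr p\<bar> \<le> p * e powr p"
    using assms by (intro mult_left_mono) auto
  moreover have "2 * y * psi' p e (y\<^sup>2) * y - p * \<bar>y\<bar> powr p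
      = p * (e powr (p - 2) * y\<^sup>2 - \<bar>y\<bar> powr p)"
    using True by (simp add: psi'_def power2_eq_square algebra_simps)
  ultimately show ?thesis using assms by (simp add: abs_mult)
next
  case False
  hence "0 < \<bar>y\<bar>" using assms by (cases "y = 0") auto
  have "(y\<^sup>2) powr ((p - 2) / 2) = \<bar>y\<bar> powr (p - 2)"
    using powr_powr[of "y\<^sup>2" "1/2" "p - 2"] by (simp add: square_powr_half)
  hence "2 * y * psi' p e (y\<^sup>2) * y = p * (\<bar>y\<bar> powr (p - 2) * \<bar>y\<bar>\<^sup>2)"
    using False by (simp add: psi'_def power2_eq_square)
  also have "\<bar>y\<bar> powr (p - 2) * \<bar>y\<bar>\<^sup>2 = \<bar>y\<bar> powr p"
    using \<open>0 < \<bar>y\<bar>\<close> by (simp add: powr_diff power2_eq_square)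
  finally show ?thesis using assms by simp
qed

lemma integrable_square_diff:
  fixes f g :: "'a \<Rightarrow> real"
  assumes [measurable]: "f \<in> borel_measurable M" "g \<in> borel_measurable M"
    and "integrable M (\<lambda>x. (f x)\<^sup>2)" "integrable M (\<lambda>x. (g x)\<^sup>2)"
  shows "integrable M (\<lambda>x. (f x - g x)\<^sup>2)"
proof (rule Bochner_Integration.integrable_bound)
  show "integrable M (\<lambda>x. 2 * (f x)\<^sup>2 + 2 * (g x)\<^sup>2)" using assms by auto
  have "(a - b)\<^sup>2 \<le> 2 * a\<^sup>2 + 2 * b\<^sup>2" for a b :: real
    using zero_le_power2[of "a + b"] by (simp add: power2_diff power2_sum)
  then show "AE x in M. norm ((f x - g x)\<^sup>2) \<le> norm (2 * (f x)\<^sup>2 + 2 * (g x)\<^sup>2)"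
    by (intro AE_I2) simp
qed measurable

context finite_measure
begin

lemma integrable_abs_powr:
  fixes f :: "'a \<Rightarrow> real"
  assumes [measurable]: "f \<in> borel_measurable M" and "integrable M (\<lambda>x. (f x)\<^sup>2)"
    and "0 < p" "p \<le> 2"
  shows "integrable M (\<lambda>x. \<bar>f x\<bar> powr p)"
proof (rule Bochner_Integration.integrable_bound)
  show "integrable M (\<lambda>x. 1 + (f x)\<^sup>2)" using assms by auto
  show "AE x in M. norm (\<bar>f x\<bar> powr p) \<le> norm (1 + (f x)\<^sup>2)"
    using powr_le_powr_add_square[of "\<bar>f x\<bar>" 1 p for x] assms by (intro AE_I2) simp
qed measurable

lemma integral_abs_powr_le:
  fixes f :: "'a \<Rightarrow> real"
  assumes [measurable]: "f \<in> borel_measurable M" and f2: "integrable M (\<lambda>x. (f x)\<^sup>2)"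
    and "0 < p" "p \<le> 2" "0 < d" and small: "(\<integral>x. (f x)\<^sup>2 \<partial>M) \<le> d\<^sup>2"
  shows "(\<integral>x. \<bar>f x\<bar> powr p \<partial>M) \<le> (measure M (space M) + 1) * d powr p"
proof -
  have "(\<integral>x. \<bar>f x\<bar> powr p \<partial>M) \<le> (\<integral>x. d powr p + d powr (p - 2) * (f x)\<^sup>2 \<partial>M)"
    using assms powr_le_powr_add_square[of "\<bar>f x\<bar>" d p for x]
    by (intro integral_mono integrable_abs_powr) auto
  also have "\<dots> = measure M (space M) * d powr p + d powr (p - 2) * (\<integral>x. (f x)\<^sup>2 \<partial>M)"
    using f2 by simp
  also have "\<dots> \<le> measure M (space M) * d powr p + d powr (p - 2) * d\<^sup>2"
    using small by (intro add_left_mono mult_left_mono) auto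
  also have "d powr (p - 2) * d\<^sup>2 = d powr p"
    using \<open>0 < d\<close> by (simp add: powr_diff power2_eq_square)
  finally show ?thesis by (simp add: algebra_simps)
qed

lemma tendsto_integral_abs_powr:
  fixes f :: "nat \<Rightarrow> 'a \<Rightarrow> real" and g :: "'a \<Rightarrow> real"
  assumes [measurable]: "\<And>k. f k \<in> borel_measurable M" "g \<in> borel_measurable M"
    and f2: "\<And>k. integrable M (\<lambda>x. (f k x)\<^sup>2)" and g2: "integrable M (\<lambda>x. (g x)\<^sup>2)"
    and L2: "(\<lambda>k. \<integral>x. (f k x - g x)\<^sup>2 \<partial>M) \<longlonglongrightarrow> 0"
    and p: "0 < p" "p \<le> 1"
  shows "(\<lambda>k. \<integral>x. \<bar>f k x\<bar> powr p \<partial>M) \<longlonglongrightarrow> (\<integral>x. \<bar>g x\<bar> powr p \<partial>M)"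
proof -
  define I where "I k = (\<integral>x. (f k x - g x)\<^sup>2 \<partial>M)" for k
  \<comment> \<open>The term \<open>1 / Suc k\<close> keeps the radius positive when \<open>I k = 0\<close>.\<close>
  define d where "d k = sqrt (I k) + 1 / Suc k" for k
  have I_nonneg: "0 \<le> I k" for k unfolding I_def by simp
  have d_pos: "0 < d k" for k unfolding d_def using I_nonneg by (simp add: add_nonneg_pos)
  have I_le: "I k \<le> (d k)\<^sup>2" for k
  proof -
    have "sqrt (I k) \<le> d k" unfolding d_def by simp
    hence "(sqrt (I k))\<^sup>2 \<le> (d k)\<^sup>2" using I_nonneg by (intro power_mono) auto
    thus ?thesis using I_nonneg by simp
  qed
  have "d \<longlonglongrightarrow> sqrt 0 + 0"
    unfolding d_def I_def by (intro tendsto_intros L2 LIMSEQ_Suc[OF lim_1_over_n])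
  hence "(\<lambda>k. (measure M (space M) + 1) * d k powr p) \<longlonglongrightarrow> (measure M (space M) + 1) * 0"
    using d_pos[THEN less_imp_le] p by (intro tendsto_mult_left tendsto_zero_powrI always_eventually) auto
  hence bound_lim: "(\<lambda>k. (measure M (space M) + 1) * d k powr p) \<longlonglongrightarrow> 0" by simp
  have bound: "\<bar>(\<integral>x. \<bar>f k x\<bar> powr p \<partial>M) - (\<integral>x. \<bar>g x\<bar> powr p \<partial>M)\<bar>
      \<le> (measure M (space M) + 1) * d k powr p" for k
  proof -
    have "\<bar>(\<integral>x. \<bar>f k x\<bar> powr p \<partial>M) - (\<integral>x. \<bar>g x\<bar> powr p \<partial>M)\<bar>
        = \<bar>\<integral>x. \<bar>f k x\<bar> powr p - \<bar>g x\<bar> powr p \<partial>M\<bar>"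
      using p f2 g2 by (simp add: integrable_abs_powr)
    also have "\<dots> \<le> (\<integral>x. \<bar>\<bar>f k x\<bar> powr p - \<bar>g x\<bar> powr p\<bar> \<partial>M)"
      by (rule integral_abs_bound[of M])
    also have "\<dots> \<le> (\<integral>x. \<bar>f k x - g x\<bar> powr p \<partial>M)"
    proof (rule integral_mono)
      show "integrable M (\<lambda>x. \<bar>\<bar>f k x\<bar> powr p - \<bar>g x\<bar> powr p\<bar>)"
        using p f2 g2 by (intro integrable_abs Bochner_Integration.integrable_diff integrable_abs_powr) auto
      show "integrable M (\<lambda>x. \<bar>f k x - g x\<bar> powr p)"
        using p f2 g2 by (intro integrable_abs_powr integrable_square_diff) auto
    qed (rule abs_diff_abs_powr_le[OF p])
    also have "\<dots> \<le> (measure M (space M) + 1) * d k powr p"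
      using p d_pos I_le f2 g2 unfolding I_def
      by (intro integral_abs_powr_le integrable_square_diff) auto
    finally show ?thesis .
  qed
  have "(\<lambda>k. (\<integral>x. \<bar>f k x\<bar> powr p \<partial>M) - (\<integral>x. \<bar>g x\<bar> powr p \<partial>M)) \<longlonglongrightarrow> 0"
    by (rule Lim_null_comparison[OF always_eventually bound_lim]) (use bound in simp)
  then show ?thesis by (rule LIM_zero_cancel)
qed

lemma tendsto_integral_psi'_weighted:
  fixes f :: "nat \<Rightarrow> 'a \<Rightarrow> real" and g :: "'a \<Rightarrow> real" and eps :: "nat \<Rightarrow> real"
  assumes [measurable]: "\<And>k. f k \<in> borel_measurable M" "g \<in> borel_measurable M"
    and f2: "\<And>k. integrable M (\<lambda>x. (f k x)\<^sup>2)" and g2: "integrable M (\<lambda>x. (g x)\<^sup>2)"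
    and L2: "(\<lambda>k. \<integral>x. (f k x - g x)\<^sup>2 \<partial>M) \<longlonglongrightarrow> 0"
    and eps: "\<And>k. 0 < eps k" "eps \<longlonglongrightarrow> 0"
    and p: "0 < p" "p \<le> 1"
  shows "(\<lambda>k. \<integral>x. 2 * f k x * psi' p (eps k) ((f k x)\<^sup>2) * f k x \<partial>M)
    \<longlonglongrightarrow> p * (\<integral>x. \<bar>g x\<bar> powr p \<partial>M)"
proof -
  define h where "h k x = 2 * f k x * psi' p (eps k) ((f k x)\<^sup>2) * f k x" for k x
  have h_meas[measurable]: "h k \<in> borel_measurable M" for k
    unfolding h_def psi'_def by measurable
  have approx: "\<bar>h k x - p * \<bar>f k x\<bar> powr p\<bar> \<le> p * eps k powr p" for k x
    unfolding h_def using psi'_weighted_approx eps p by simp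
  have fp_int: "integrable M (\<lambda>x. \<bar>f k x\<bar> powr p)" for k
    using f2 p by (intro integrable_abs_powr) auto
  have h_int: "integrable M (h k)" for k
  proof (rule Bochner_Integration.integrable_bound)
    show "integrable M (\<lambda>x. p * \<bar>f k x\<bar> powr p + p * eps k powr p)" using fp_int by auto
    show "AE x in M. norm (h k x) \<le> norm (p * \<bar>f k x\<bar> powr p + p * eps k powr p)"
    proof (rule AE_I2)
      fix x
      have "0 \<le> p * \<bar>f k x\<bar> powr p" "0 \<le> p * eps k powr p" using p by auto
      then show "norm (h k x) \<le> norm (p * \<bar>f k x\<bar> powr p + p * eps k powr p)"
        using approx[of k x] by (simp add: abs_le_iff)
    qed
  qed measurable
  have bound: "\<bar>(\<integral>x. h k x \<partial>M) - p * (\<integral>x. \<bar>f k x\<bar> powr p \<partial>M)\<bar>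
      \<le> measure M (space M) * (p * eps k powr p)" for k
  proof -
    have "\<bar>(\<integral>x. h k x \<partial>M) - p * (\<integral>x. \<bar>f k x\<bar> powr p \<partial>M)\<bar>
        = \<bar>\<integral>x. h k x - p * \<bar>f k x\<bar> powr p \<partial>M\<bar>"
      using h_int fp_int by simp
    also have "\<dots> \<le> (\<integral>x. \<bar>h k x - p * \<bar>f k x\<bar> powr p\<bar> \<partial>M)"
      by (rule integral_abs_bound[of M])
    also have "\<dots> \<le> (\<integral>x. p * eps k powr p \<partial>M)"
    proof (rule integral_mono)
      show "integrable M (\<lambda>x. \<bar>h k x - p * \<bar>f k x\<bar> powr p\<bar>)"
        using h_int fp_int by (intro integrable_abs Bochner_Integration.integrable_diff integrable_mult_right)
    qed (simp_all add: approx)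
    finally show ?thesis by simp
  qed
  have "(\<lambda>k. measure M (space M) * (p * eps k powr p)) \<longlonglongrightarrow> measure M (space M) * (p * 0)"
    using eps(1)[THEN less_imp_le] eps(2) p by (intro tendsto_intros tendsto_zero_powrI always_eventually) auto
  hence bound_lim: "(\<lambda>k. measure M (space M) * (p * eps k powr p)) \<longlonglongrightarrow> 0" by simp
  have "(\<lambda>k. (\<integral>x. h k x \<partial>M) - p * (\<integral>x. \<bar>f k x\<bar> powr p \<partial>M)) \<longlonglongrightarrow> 0"
    by (rule Lim_null_comparison[OF always_eventually bound_lim]) (use bound in simp)
  moreover have "(\<lambda>k. p * (\<integral>x. \<bar>f k x\<bar> powr p \<partial>M)) \<longlonglongrightarrow> p * (\<integral>x. \<bar>g x\<bar> powr p \<partial>M)"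
    using assms by (intro tendsto_mult_left tendsto_integral_abs_powr) auto
  ultimately have "(\<lambda>k. ((\<integral>x. h k x \<partial>M) - p * (\<integral>x. \<bar>f k x\<bar> powr p \<partial>M))
      + p * (\<integral>x. \<bar>f k x\<bar> powr p \<partial>M)) \<longlonglongrightarrow> 0 + p * (\<integral>x. \<bar>g x\<bar> powr p \<partial>M)"
    by (rule tendsto_add)
  then show ?thesis unfolding h_def by simp
qed

end

lemma embedding_square_integrable:
  assumes emb: "compact_dense_embedding \<Omega> \<iota>" and \<Omega>: "\<Omega> \<in> sets lebesgue"
  shows "\<iota> v \<in> borel_measurable (restrict_space lebesgue \<Omega>)"
    and "integrable (restrict_space lebesgue \<Omega>) (\<lambda>x. (\<iota> v x)\<^sup>2)"
proof -
  have "\<iota> v \<in> L2set \<Omega>" using emb by (simp add: compact_dense_embedding_def)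
  then show "\<iota> v \<in> borel_measurable (restrict_space lebesgue \<Omega>)"
    and "integrable (restrict_space lebesgue \<Omega>) (\<lambda>x. (\<iota> v x)\<^sup>2)"
    using \<Omega> by (simp_all add: L2set_def set_borel_measurable_def set_integrable_def
        borel_measurable_restrict_space_iff integrable_restrict_space)
qed

lemma L2norm_eq_restrict_space:
  assumes "\<Omega> \<in> sets lebesgue"
  shows "L2norm \<Omega> f = sqrt (\<integral>x. (f x)\<^sup>2 \<partial>restrict_space lebesgue \<Omega>)"
  using assms by (simp add: L2norm_def set_lebesgue_integral_def integral_restrict_space)

lemma tendsto_square_integral_embedding:
  fixes \<iota> :: "'v::{real_inner,complete_space} \<Rightarrow> 'a::euclidean_space \<Rightarrow> real"
  assumes emb: "compact_dense_embedding \<Omega> \<iota>" and \<Omega>: "\<Omega> \<in> sets lebesgue"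
    and u: "u \<longlonglongrightarrow> ubar"
  shows "(\<lambda>k. \<integral>x. (\<iota> (u k) x - \<iota> ubar x)\<^sup>2 \<partial>restrict_space lebesgue \<Omega>) \<longlonglongrightarrow> 0"
proof -
  let ?M = "restrict_space lebesgue \<Omega>"
  obtain C where C: "\<And>v. L2norm \<Omega> (\<iota> v) \<le> C * norm v"
    using emb by (auto simp: compact_dense_embedding_def)
  note [measurable] = embedding_square_integrable(1)[OF emb \<Omega>]
  have linear: "AE x in ?M. \<iota> (w - v) x = \<iota> w x - \<iota> v x" for w v
  proof -
    note emb' = emb[unfolded compact_dense_embedding_def, THEN conjunct2]
    have "AE x in lebesgue. x \<in> \<Omega> \<longrightarrow> \<iota> (w + - v) x = \<iota> w x + \<iota> (- v) x"
      using emb'[THEN conjunct1] by blast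
    moreover have "AE x in lebesgue. x \<in> \<Omega> \<longrightarrow> \<iota> ((-1) *\<^sub>R v) x = -1 * \<iota> v x"
      using emb'[THEN conjunct2, THEN conjunct1] by blast
    ultimately have "AE x in lebesgue. x \<in> \<Omega> \<longrightarrow> \<iota> (w - v) x = \<iota> w x - \<iota> v x"
      by eventually_elim simp
    then show ?thesis using \<Omega> by (simp add: AE_restrict_space_iff)
  qed
  have bound: "(\<integral>x. (\<iota> (u k) x - \<iota> ubar x)\<^sup>2 \<partial>?M) \<le> (C * norm (u k - ubar))\<^sup>2" for k
  proof -
    have "(\<integral>x. (\<iota> (u k) x - \<iota> ubar x)\<^sup>2 \<partial>?M) = (\<integral>x. (\<iota> (u k - ubar) x)\<^sup>2 \<partial>?M)"
    proof (rule integral_cong_AE)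
      show "AE x in ?M. (\<iota> (u k) x - \<iota> ubar x)\<^sup>2 = (\<iota> (u k - ubar) x)\<^sup>2"
        using linear[of "u k" ubar] by eventually_elim simp
    qed measurable
    also have "\<dots> = (L2norm \<Omega> (\<iota> (u k - ubar)))\<^sup>2"
      using \<Omega> by (simp add: L2norm_eq_restrict_space)
    also have "\<dots> \<le> (C * norm (u k - ubar))\<^sup>2"
      using C \<Omega> by (intro power_mono) (simp_all add: L2norm_eq_restrict_space)
    finally show ?thesis .
  qed
  have "(\<lambda>k. (C * norm (u k - ubar))\<^sup>2) \<longlonglongrightarrow> (C * norm (ubar - ubar))\<^sup>2"
    using u by (intro tendsto_intros)
  hence bound_lim: "(\<lambda>k. (C * norm (u k - ubar))\<^sup>2) \<longlonglongrightarrow> 0" by simp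
  show ?thesis
    by (rule Lim_null_comparison[OF always_eventually bound_lim]) (use bound in simp)
qed

theorem lemma5p5:
  fixes \<Omega> :: "'a::euclidean_space set"
    and \<iota> :: "'v::{real_inner,complete_space} \<Rightarrow> 'a \<Rightarrow> real"
    and F :: "'v \<Rightarrow> real"
    and \<alpha> \<beta> p \<rho> :: real
    and ubar :: 'v and eps :: "nat \<Rightarrow> real" and u :: "nat \<Rightarrow> 'v"
    and lam :: "nat \<Rightarrow> ('v \<Rightarrow>\<^sub>L real)" and lbar :: "'v \<Rightarrow>\<^sub>L real"
  assumes dom: "lipschitz_domain \<Omega>" "bounded \<Omega>"
    and emb: "compact_dense_embedding \<Omega> \<iota>"
    and F_wlsc: "weakly_lsc F"
    and F_below: "bounded_below_affine F"
    and F_C1: "continuously_frechet_differentiable F"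
    and params: "\<alpha> > 0" "\<beta> > 0" "0 < p" "p < 1"
    and rho: "\<rho> > 0"
    and loc: "\<forall>w. norm (w - ubar) \<le> \<rho> \<longrightarrow> Phi \<Omega> \<iota> F \<alpha> \<beta> p 0 ubar \<le> Phi \<Omega> \<iota> F \<alpha> \<beta> p 0 w"
    and eps_pos: "\<forall>k. eps k > 0" and eps_lim: "eps \<longlonglongrightarrow> 0"
    and u_feas: "\<forall>k. norm (u k - ubar) \<le> \<rho>"
    and u_opt: "\<forall>k w. norm (w - ubar) \<le> \<rho> \<longrightarrow>
        Phi \<Omega> \<iota> F \<alpha> \<beta> p (eps k) (u k) + 1/2 * (L2norm \<Omega> (\<lambda>x. \<iota> (u k) x - \<iota> ubar x))\<^sup>2
        \<le> Phi \<Omega> \<iota> F \<alpha> \<beta> p (eps k) w + 1/2 * (L2norm \<Omega> (\<lambda>x. \<iota> w x - \<iota> ubar x))\<^sup>2"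
    and lam_def: "\<forall>k v. blinfun_apply (lam k) v =
        (LINT x:\<Omega>|lebesgue. 2 * \<iota> (u k) x * psi' p (eps k) ((\<iota> (u k) x)\<^sup>2) * \<iota> v x)"
    and u_conv: "u \<longlonglongrightarrow> ubar"
    and lam_conv: "lam \<longlonglongrightarrow> lbar"
  shows "(\<lambda>k. blinfun_apply (lam k) (u k)) \<longlonglongrightarrow> blinfun_apply lbar ubar
    \<and> blinfun_apply lbar ubar = p * (LINT x:\<Omega>|lebesgue. \<bar>\<iota> ubar x\<bar> powr p)"
proof -
  let ?M = "restrict_space lebesgue \<Omega>"
  have "open \<Omega>" using dom(1) by (simp add: lipschitz_domain_def)
  hence \<Omega>: "\<Omega> \<in> sets lebesgue" "emeasure lebesgue \<Omega> < \<infinity>"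
    using lmeasurable_open[OF dom(2)] by (auto simp: fmeasurable_def)
  interpret finite_measure ?M
    using \<Omega> by (intro finite_measureI) (simp add: space_restrict_space emeasure_restrict_space)
  have set_integral_eq: "(LINT x:\<Omega>|lebesgue. f x) = (\<integral>x. f x \<partial>?M)" for f :: "'a \<Rightarrow> real"
    using \<Omega> by (simp add: set_lebesgue_integral_def integral_restrict_space)
  have "(\<lambda>k. blinfun_apply (lam k) (u k)) \<longlonglongrightarrow> p * (\<integral>x. \<bar>\<iota> ubar x\<bar> powr p \<partial>?M)"
    unfolding lam_def[rule_format] set_integral_eq
    using embedding_square_integrable[OF emb \<Omega>(1)] eps_pos eps_lim params
      tendsto_square_integral_embedding[OF emb \<Omega>(1) u_conv]
    by (intro tendsto_integral_psi'_weighted) auto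
  moreover have "(\<lambda>k. blinfun_apply (lam k) (u k)) \<longlonglongrightarrow> blinfun_apply lbar ubar"
    using lam_conv u_conv by (rule bounded_bilinear.tendsto[OF bounded_bilinear_blinfun_apply])
  ultimately show ?thesis
    using LIMSEQ_unique set_integral_eq by metis
qed

end
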